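(* Let $b\in\{0,1\}^d$ be a bitmap and let $q\in\mathbb{R}^d$ be the effective gradient associated with $b$. Then there exists a bitmap $\bar b\ge b$ such that $q$ equals the simple gradient associated with $\bar b$.
   Context: Jackson network with a tree topology on nodes $\{1,\dots,d\}$, root node $1$; $i\to j$ means node $j$ is a child of node $i$. Customers arrive from outside only at node $1$, with rate $\lambda>0$. For $i\to j$, $\mu_{i,j}>0$ is the rate at which node $i$ serves customers and sends them to node $j$; $\mu_{i,0}\ge 0$ is the rate at which node $i$ serves customers who then leave the system. Let $\mu_i=\sum_{k:i\to k}\mu_{i,k}+\mu_{i,0}>0$. Arrival rates: $\Lambda_1=\lambda$ and $\Lambda_j=\Lambda_i\mu_{i,j}/\mu_i$ if $i\to j$. Utilities $\rho_i=\Lambda_i/\mu_i$, assumed to satisfy $\max_i\rho_i<1$; also $\lambda+\sum_i\mu_i=1$. Let $\mu'_{i,0}=\Lambda_i\mu_{i,0}/\mu_i$. A bitmap $b\in\{0,1\}^d$ encodes which nodes are nonempty ($b(i)=1$) or empty ($b(i)=0$); $b'\ge b$ means $b'(i)\ge b(i)$ for all $i$. Effective rates (defined recursively from the leaves up): $M_i(b)=\mu_i$ if $b(i)=1$, and $M_i(b)=\min\big(\mu_i,\ \sum_{k:i\to k}M_k(b)+\mu'_{i,0}\big)$ if $b(i)=0$. The effective gradient of $b$ is $q\in\mathbb{R}^d$ with $q(i)=2\log(\Lambda_i/M_i(b))$. Simple rates: $m_i(b)=\mu_i$ if $b(i)=1$, and $m_i(b)=\sum_{k:i\to k}m_k(b)+\mu'_{i,0}$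 if $b(i)=0$. The simple gradient of $b$ is $q$ with $q(i)=2\log(\Lambda_i/m_i(b))$. *)

theory Defs
  imports Complex_Main
begin

text \<open>Nodes are 1..d. E i j means i -> j (j is a child of i). The exit rate mu_{i,0}
  is mu i 0 (node indices are >= 1, so index 0 is free). Bitmaps are nat => bool
  (True = nonempty), only their values on 1..d matter.\<close>

definition rooted_tree :: "nat \<Rightarrow> (nat \<Rightarrow> nat \<Rightarrow> bool) \<Rightarrow> bool" where
  "rooted_tree d E \<longleftrightarrow> 1 \<le> d
     \<and> (\<forall>i j. E i j \<longrightarrow> i \<in> {1..d} \<and> j \<in> {1..d})
     \<and> (\<forall>i. \<not> E i 1)
     \<and> (\<forall>j\<in>{2..d}. \<exists>!i. E i j)
     \<and> (\<forall>j\<in>{1..d}. (1, j) \<in> {(i, k). E i k}\<^sup>*)"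

definition children :: "nat \<Rightarrow> (nat \<Rightarrow> nat \<Rightarrow> bool) \<Rightarrow> nat \<Rightarrow> nat set" where
  "children d E i = {k \<in> {1..d}. E i k}"

definition mu_tot :: "nat \<Rightarrow> (nat \<Rightarrow> nat \<Rightarrow> bool) \<Rightarrow> (nat \<Rightarrow> nat \<Rightarrow> real) \<Rightarrow> nat \<Rightarrow> real" where
  "mu_tot d E mu i = (\<Sum>k\<in>children d E i. mu i k) + mu i 0"

definition mu_exit :: "nat \<Rightarrow> (nat \<Rightarrow> nat \<Rightarrow> bool) \<Rightarrow> (nat \<Rightarrow> nat \<Rightarrow> real) \<Rightarrow> (nat \<Rightarrow> real) \<Rightarrow> nat \<Rightarrow> real" where
  "mu_exit d E mu Lam i = Lam i * mu i 0 / mu_tot d E mu i"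

text \<open>Recursion from the leaves up, implemented with a fuel parameter; with fuel d
  (>= height of the tree + 1) the base case is never reached on the tree.\<close>

fun effR :: "nat \<Rightarrow> (nat \<Rightarrow> nat \<Rightarrow> bool) \<Rightarrow> (nat \<Rightarrow> nat \<Rightarrow> real) \<Rightarrow> (nat \<Rightarrow> real)
              \<Rightarrow> (nat \<Rightarrow> bool) \<Rightarrow> nat \<Rightarrow> nat \<Rightarrow> real" where
  "effR d E mu Lam b 0 i = mu_tot d E mu i"
| "effR d E mu Lam b (Suc n) i =
     (if b i then mu_tot d E mu i
      else min (mu_tot d E mu i)
               ((\<Sum>k\<in>children d E i. effR d E mu Lam b n k) + mu_exit d E mu Lam i))"

fun simpR :: "nat \<Rightarrow> (nat \<Rightarrow> nat \<Rightarrow> bool) \<Rightarrow> (nat \<Rightarrow> nat \<Rightarrow> real) \<Rightarrow> (nat \<Rightarrow> real)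
              \<Rightarrow> (nat \<Rightarrow> bool) \<Rightarrow> nat \<Rightarrow> nat \<Rightarrow> real" where
  "simpR d E mu Lam b 0 i = mu_tot d E mu i"
| "simpR d E mu Lam b (Suc n) i =
     (if b i then mu_tot d E mu i
      else (\<Sum>k\<in>children d E i. simpR d E mu Lam b n k) + mu_exit d E mu Lam i)"

definition eff_rate where "eff_rate d E mu Lam b i = effR d E mu Lam b d i"
definition simple_rate where "simple_rate d E mu Lam b i = simpR d E mu Lam b d i"

definition eff_grad :: "nat \<Rightarrow> (nat \<Rightarrow> nat \<Rightarrow> bool) \<Rightarrow> (nat \<Rightarrow> nat \<Rightarrow> real) \<Rightarrow> (nat \<Rightarrow> real)
              \<Rightarrow> (nat \<Rightarrow> bool) \<Rightarrow> nat \<Rightarrow> real" where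
  "eff_grad d E mu Lam b i = 2 * ln (Lam i / eff_rate d E mu Lam b i)"

definition simple_grad :: "nat \<Rightarrow> (nat \<Rightarrow> nat \<Rightarrow> bool) \<Rightarrow> (nat \<Rightarrow> nat \<Rightarrow> real) \<Rightarrow> (nat \<Rightarrow> real)
              \<Rightarrow> (nat \<Rightarrow> bool) \<Rightarrow> nat \<Rightarrow> real" where
  "simple_grad d E mu Lam b i = 2 * ln (Lam i / simple_rate d E mu Lam b i)"

definition jackson_tree ::
  "nat \<Rightarrow> (nat \<Rightarrow> nat \<Rightarrow> bool) \<Rightarrow> real \<Rightarrow> (nat \<Rightarrow> nat \<Rightarrow> real) \<Rightarrow> (nat \<Rightarrow> real) \<Rightarrow> bool" where
  "jackson_tree d E lam mu Lam \<longleftrightarrow>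
     rooted_tree d E \<and> lam > 0
     \<and> (\<forall>i j. E i j \<longrightarrow> mu i j > 0)
     \<and> (\<forall>i\<in>{1..d}. mu i 0 \<ge> 0 \<and> mu_tot d E mu i > 0)
     \<and> Lam 1 = lam
     \<and> (\<forall>i j. E i j \<longrightarrow> Lam j = Lam i * mu i j / mu_tot d E mu i)
     \<and> (\<forall>i\<in>{1..d}. Lam i / mu_tot d E mu i < 1)
     \<and> lam + (\<Sum>i\<in>{1..d}. mu_tot d E mu i) = 1"

end

theory Submission
  imports Defs
begin

(* Put bb i = b i or M_i(b) = mu_i ("saturate" every node whose effective
   rate is capped at its service rate).  At a node with bb i false, the minimum in the
   definition of M_i(b) is attained by the sum over the children, which is exactly the
   recursion for the simple rate m_i(bb); at a node with bb i true both rates equal mu_i.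
   Hence m_i(bb) = M_i(b) for every node, by induction from the leaves up, and the two
   gradients coincide. *)

abbreviation edges :: "(nat \<Rightarrow> nat \<Rightarrow> bool) \<Rightarrow> (nat \<times> nat) set" where
  "edges E \<equiv> {(i, k). E i k}"

definition depth :: "(nat \<Rightarrow> nat \<Rightarrow> bool) \<Rightarrow> nat \<Rightarrow> nat" where
  "depth E j = (LEAST n. (1, j) \<in> edges E ^^ n)"

text \<open>Depth increases along every edge, because every non-root node has a unique parent
  and the root has none.\<close>
lemma depth_edge:
  assumes rt: "rooted_tree d E" and e: "E p j"
  shows "depth E p < depth E j"
proof -
  from rt e have "j \<in> {1..d}" and "j \<noteq> 1" unfolding rooted_tree_def by auto
  with rt have j: "j \<in> {2..d}" and j_reach: "(1, j) \<in> (edges E)\<^sup>*"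
    unfolding rooted_tree_def by auto
  then obtain n where "(1, j) \<in> edges E ^^ n" using rtrancl_power by blast
  hence shortest: "(1, j) \<in> edges E ^^ depth E j" unfolding depth_def by (rule LeastI)
  have "depth E j \<noteq> 0" using shortest j by (cases "depth E j") auto
  then obtain m where m: "depth E j = Suc m" by (cases "depth E j") auto
  with shortest obtain p' where p': "(1, p') \<in> edges E ^^ m" "E p' j" by auto
  from rt j have "\<exists>!i. E i j" unfolding rooted_tree_def by auto
  with p' e have "p' = p" by auto
  with p' have "depth E p \<le> m" unfolding depth_def by (auto intro: Least_le)
  with m show ?thesis by simp
qed

lemma rooted_tree_acyclic:
  assumes rt: "rooted_tree d E"
  shows "(i, i) \<notin> (edges E)\<^sup>+"
proof
  assume "(i, i) \<in> (edges E)\<^sup>+"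
  moreover have "(i, j) \<in> (edges E)\<^sup>+ \<Longrightarrow> depth E i < depth E j" for j
    by (induction rule: trancl_induct) (use depth_edge[OF rt] less_trans in blast)+
  ultimately show False by blast
qed

definition subtree :: "(nat \<Rightarrow> nat \<Rightarrow> bool) \<Rightarrow> nat \<Rightarrow> nat set" where
  "subtree E i = {j. (i, j) \<in> (edges E)\<^sup>*}"

lemma subtree_subset:
  assumes rt: "rooted_tree d E" and i: "i \<in> {1..d}"
  shows "subtree E i \<subseteq> {1..d}"
proof
  fix j assume "j \<in> subtree E i"
  hence "(i, j) \<in> (edges E)\<^sup>*" by (simp add: subtree_def)
  then show "j \<in> {1..d}"
    by (cases rule: rtranclE) (use rt i in \<open>auto simp: rooted_tree_def\<close>)
qed

lemma subtree_card_bounds: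
  assumes rt: "rooted_tree d E" and i: "i \<in> {1..d}"
  shows "1 \<le> card (subtree E i)" and "card (subtree E i) \<le> d"
proof -
  have fin: "finite (subtree E i)" using subtree_subset[OF rt i] finite_subset by blast
  have "i \<in> subtree E i" by (simp add: subtree_def)
  with fin show "1 \<le> card (subtree E i)" by (auto simp: Suc_le_eq card_gt_0_iff)
  show "card (subtree E i) \<le> d" using card_mono[OF _ subtree_subset[OF rt i]] by simp
qed

lemma subtree_card_child:
  assumes rt: "rooted_tree d E" and e: "E i k"
  shows "card (subtree E k) < card (subtree E i)"
proof (rule psubset_card_mono)
  have i: "i \<in> {1..d}" using rt e by (simp add: rooted_tree_def)
  show "finite (subtree E i)" using subtree_subset[OF rt i] finite_subset by blast
  have "subtree E k \<subseteq> subtree E i"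
    using e unfolding subtree_def by (auto intro: converse_rtrancl_into_rtrancl)
  moreover have "i \<in> subtree E i" by (simp add: subtree_def)
  moreover have "i \<notin> subtree E k"
    using rooted_tree_acyclic[OF rt, of i] e
    by (auto simp: subtree_def intro: rtrancl_into_trancl2)
  ultimately show "subtree E k \<subset> subtree E i" by blast
qed

lemma children_in_tree:
  "k \<in> children d E i \<Longrightarrow> k \<in> {1..d} \<and> E i k"
  by (simp add: children_def)

text \<open>The effective-rate recursion does not depend on the fuel once the fuel is at least
  the size of the subtree, so the fuel d used in the definition computes the true M_i.\<close>
lemma effR_fuel_stable:
  assumes rt: "rooted_tree d E" and i: "i \<in> {1..d}"
    and n: "card (subtree E i) \<le> n" and m: "card (subtree E i) \<le> m"
  shows "effR d E mu Lam b n i = effR d E mu Lam b m i"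
  using i n m
proof (induction i arbitrary: n m rule: measure_induct_rule[of "\<lambda>i. card (subtree E i)"])
  case (less i)
  obtain n' m' where n': "n = Suc n'" and m': "m = Suc m'"
    using less.prems subtree_card_bounds(1)[OF rt less.prems(1)] by (cases n; cases m) auto
  have "effR d E mu Lam b n' k = effR d E mu Lam b m' k" if k: "k \<in> children d E i" for k
    using less.IH[of k] children_in_tree[OF k] subtree_card_child[OF rt] less.prems n' m'
    by fastforce
  then show ?case unfolding n' m' by (simp cong: sum.cong)
qed

lemma effR_eq_eff_rate:
  assumes rt: "rooted_tree d E" and i: "i \<in> {1..d}" and n: "card (subtree E i) \<le> n"
  shows "effR d E mu Lam b n i = eff_rate d E mu Lam b i"
  unfolding eff_rate_def
  using effR_fuel_stable[OF rt i n] subtree_card_bounds(2)[OF rt i] by blast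

definition saturation ::
  "nat \<Rightarrow> (nat \<Rightarrow> nat \<Rightarrow> bool) \<Rightarrow> (nat \<Rightarrow> nat \<Rightarrow> real) \<Rightarrow> (nat \<Rightarrow> real) \<Rightarrow> (nat \<Rightarrow> bool)
     \<Rightarrow> nat \<Rightarrow> bool" where
  "saturation d E mu Lam b i \<longleftrightarrow> b i \<or> eff_rate d E mu Lam b i = mu_tot d E mu i"

lemma eff_rate_unsaturated:
  assumes rt: "rooted_tree d E" and i: "i \<in> {1..d}"
    and unsat: "\<not> saturation d E mu Lam b i"
  shows "eff_rate d E mu Lam b i
           = (\<Sum>k\<in>children d E i. eff_rate d E mu Lam b k) + mu_exit d E mu Lam i"
proof -
  obtain d' where d': "d = Suc d'" using i by (cases d) auto
  have "effR d E mu Lam b d' k = eff_rate d E mu Lam b k" if k: "k \<in> children d E i" for k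
    using effR_eq_eff_rate[OF rt] children_in_tree[OF k] subtree_card_child[OF rt]
      subtree_card_bounds(2)[OF rt i] d' by fastforce
  moreover have "eff_rate d E mu Lam b i
      = (\<Sum>k\<in>children d E i. effR d E mu Lam b d' k) + mu_exit d E mu Lam i"
    using unsat unfolding saturation_def eff_rate_def d' by (auto simp: min_def)
  ultimately show ?thesis by (simp cong: sum.cong)
qed

lemma simpR_saturation:
  assumes rt: "rooted_tree d E" and i: "i \<in> {1..d}" and n: "card (subtree E i) \<le> n"
  shows "simpR d E mu Lam (saturation d E mu Lam b) n i = eff_rate d E mu Lam b i"
  using i n
proof (induction i arbitrary: n rule: measure_induct_rule[of "\<lambda>i. card (subtree E i)"])
  case (less i)
  let ?bb = "saturation d E mu Lam b"
  obtain n' where n': "n = Suc n'"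
    using less.prems subtree_card_bounds(1)[OF rt less.prems(1)] by (cases n) auto
  show ?case
  proof (cases "?bb i")
    case True
    obtain d' where "d = Suc d'" using less.prems(1) by (cases d) auto
    with True show ?thesis
      unfolding n' by (auto simp: saturation_def eff_rate_def)
  next
    case False
    have "simpR d E mu Lam ?bb n' k = eff_rate d E mu Lam b k" if k: "k \<in> children d E i" for k
      using less.IH[of k] children_in_tree[OF k] subtree_card_child[OF rt] less.prems n'
      by fastforce
    then show ?thesis
      using eff_rate_unsaturated[OF rt less.prems(1) False] False
      unfolding n' by (simp cong: sum.cong)
  qed
qed

theorem mainTheorem1:
  fixes d :: nat and E :: "nat \<Rightarrow> nat \<Rightarrow> bool" and lam :: real
    and mu :: "nat \<Rightarrow> nat \<Rightarrow> real" and Lam :: "nat \<Rightarrow> real" and b :: "nat \<Rightarrow> bool"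
  assumes "jackson_tree d E lam mu Lam"
  shows "\<exists>bb :: nat \<Rightarrow> bool. (\<forall>i\<in>{1..d}. b i \<longrightarrow> bb i)
           \<and> (\<forall>i\<in>{1..d}. eff_grad d E mu Lam b i = simple_grad d E mu Lam bb i)"
proof (intro exI conjI ballI impI)
  have rt: "rooted_tree d E" using assms by (simp add: jackson_tree_def)
  let ?bb = "saturation d E mu Lam b"
  fix i assume i: "i \<in> {1..d}"
  show "b i \<Longrightarrow> ?bb i" by (simp add: saturation_def)
  have "simple_rate d E mu Lam ?bb i = eff_rate d E mu Lam b i"
    unfolding simple_rate_def
    using simpR_saturation[OF rt i] subtree_card_bounds(2)[OF rt i] by blast
  then show "eff_grad d E mu Lam b i = simple_grad d E mu Lam ?bb i"
    by (simp add: eff_grad_def simple_grad_def)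
qed

end
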